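(* Let $\lambda=\{k_1,\dots,k_q\}$ be a partition of a positive integer $k$ and let $G$ be a graph. Then $G$ is $\lambda$-choosable if and only if $G$ is $L$-colourable for every special $\lambda$-assignment $L$ of $G$.
   Context: A partition of a positive integer $k$ is a finite multiset $\lambda=\{k_1,\dots,k_q\}$ of positive integers with $k_1+\dots+k_q=k$; the $k_i$ are its parts. An assignment $L$ of a graph $G$ assigns to each vertex $v$ a set $L(v)$ of colours; a $k$-assignment has $|L(v)|=k$ for all $v$; $G$ is $L$-colourable if there is a proper colouring $f$ with $f(v)\in L(v)$ for all $v$. A $\lambda$-assignment of $G$ is a $k$-assignment $L$ such that the colour set $\bigcup_{v\in V(G)}L(v)$ can be partitioned into sets $C_1,\dots,C_q$ (colour groups) with $|L(v)\cap C_i|=k_i$ for every vertex $v$ and every $i$. $G$ is $\lambda$-choosable if $G$ is $L$-colourable for every $\lambda$-assignment $L$. A $\lambda$-assignment $L$ with colour groups $C_1,\dots,C_q$ is special if $C_i$ is a singleton for every $i$ with $k_i=1$. *)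

theory Defs
  imports Main "HOL-Library.Multiset"
begin

definition graph :: "'v set \<Rightarrow> ('v \<Rightarrow> 'v \<Rightarrow> bool) \<Rightarrow> bool" where
  "graph V E \<longleftrightarrow> finite V \<and> (\<forall>u v. E u v \<longrightarrow> u \<in> V \<and> v \<in> V)
     \<and> (\<forall>u v. E u v \<longrightarrow> E v u) \<and> (\<forall>v. \<not> E v v)"

definition is_partition :: "nat multiset \<Rightarrow> nat \<Rightarrow> bool" where
  "is_partition lam k \<longleftrightarrow> (\<forall>x \<in># lam. x > 0) \<and> sum_mset lam = k"

definition k_assignment :: "'v set \<Rightarrow> ('v \<Rightarrow> 'c set) \<Rightarrow> nat \<Rightarrow> bool" where
  "k_assignment V L k \<longleftrightarrow> (\<forall>v \<in> V. finite (L v) \<and> card (L v) = k)"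

definition L_colourable :: "'v set \<Rightarrow> ('v \<Rightarrow> 'v \<Rightarrow> bool) \<Rightarrow> ('v \<Rightarrow> 'c set) \<Rightarrow> bool" where
  "L_colourable V E L \<longleftrightarrow> (\<exists>f. (\<forall>v \<in> V. f v \<in> L v) \<and> (\<forall>u v. E u v \<longrightarrow> f u \<noteq> f v))"

(* The partition is given as the list ks = [k_1,...,k_q] (lambda = mset ks); C i is the colour
   group belonging to the part ks ! i. *)
definition colour_groups ::
  "'v set \<Rightarrow> ('v \<Rightarrow> 'c set) \<Rightarrow> nat list \<Rightarrow> (nat \<Rightarrow> 'c set) \<Rightarrow> bool" where
  "colour_groups V L ks C \<longleftrightarrow>
     (\<Union>i<length ks. C i) = (\<Union>v\<in>V. L v)
     \<and> (\<forall>i<length ks. \<forall>j<length ks. i \<noteq> j \<longrightarrow> C i \<inter> C j = {})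
     \<and> (\<forall>v\<in>V. \<forall>i<length ks. card (L v \<inter> C i) = ks ! i)"

definition lambda_assignment :: "'v set \<Rightarrow> ('v \<Rightarrow> 'c set) \<Rightarrow> nat list \<Rightarrow> bool" where
  "lambda_assignment V L ks \<longleftrightarrow> k_assignment V L (sum_list ks) \<and> (\<exists>C. colour_groups V L ks C)"

definition special_lambda_assignment :: "'v set \<Rightarrow> ('v \<Rightarrow> 'c set) \<Rightarrow> nat list \<Rightarrow> bool" where
  "special_lambda_assignment V L ks \<longleftrightarrow> k_assignment V L (sum_list ks) \<and>
     (\<exists>C. colour_groups V L ks C \<and> (\<forall>i<length ks. ks ! i = 1 \<longrightarrow> (\<exists>c. C i = {c})))"

definition lambda_choosable ::
  "'v set \<Rightarrow> ('v \<Rightarrow> 'v \<Rightarrow> bool) \<Rightarrow> nat list \<Rightarrow> 'c itself \<Rightarrow> bool" where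
  "lambda_choosable V E ks _ \<longleftrightarrow>
     (\<forall>L :: 'v \<Rightarrow> 'c set. lambda_assignment V L ks \<longrightarrow> L_colourable V E L)"

end

theory Submission
  imports Defs
begin

text \<open>Given a \<lambda>-assignment L with colour groups C, collapse every group C i with k_i = 1 to
  a single colour while fixing all other colours. This map sends each group into itself and
  is injective on every list L v, because L v meets a group with k_i = 1 in exactly one colour.
  Hence the image of L is a special \<lambda>-assignment, and any colouring of the image pulls back
  to a colouring of L, since distinct images have distinct preimages.\<close>

lemma L_colourable_image:
  assumes edges: "\<forall>u v. E u v \<longrightarrow> u \<in> V \<and> v \<in> V"
    and "L_colourable V E (\<lambda>v. g ` L v)"
  shows "L_colourable V E L"
proof -
  obtain f' where f'_in: "\<forall>v\<in>V. f' v \<in> g ` L v" and f'_proper: "\<forall>u v. E u v \<longrightarrow> f' u \<noteq> f' v"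
    using assms(2) unfolding L_colourable_def by blast
  define f where "f v = (SOME x. x \<in> L v \<and> g x = f' v)" for v
  have f: "f v \<in> L v \<and> g (f v) = f' v" if "v \<in> V" for v
  proof -
    have "\<exists>x. x \<in> L v \<and> g x = f' v"
      using f'_in that by (metis imageE)
    then show ?thesis
      unfolding f_def by (rule someI_ex)
  qed
  have "f u \<noteq> f v" if "E u v" for u v
  proof -
    have "u \<in> V" "v \<in> V"
      using edges that by blast+
    then have "g (f u) = f' u" "g (f v) = f' v"
      using f by blast+
    then show ?thesis
      using f'_proper that by metis
  qed
  then show ?thesis
    unfolding L_colourable_def using f by (intro exI[of _ f]) blast
qed

lemma k_assignment_image:
  assumes "k_assignment V L k" and "\<forall>v\<in>V. inj_on g (L v)"
  shows "k_assignment V (\<lambda>v. g ` L v) k"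
  using assms unfolding k_assignment_def by (simp add: card_image)

lemma colour_groups_image:
  assumes groups: "colour_groups V L ks C"
    and into: "\<forall>i<length ks. g ` C i \<subseteq> C i"
    and inj: "\<forall>v\<in>V. inj_on g (L v)"
  shows "colour_groups V (\<lambda>v. g ` L v) ks (\<lambda>i. g ` C i)"
proof -
  have cover: "(\<Union>i<length ks. C i) = (\<Union>v\<in>V. L v)"
    and disj: "\<And>i j. i < length ks \<Longrightarrow> j < length ks \<Longrightarrow> i \<noteq> j \<Longrightarrow> C i \<inter> C j = {}"
    and card: "\<And>v i. v \<in> V \<Longrightarrow> i < length ks \<Longrightarrow> card (L v \<inter> C i) = ks ! i"
    using groups unfolding colour_groups_def by auto
  have trace: "g ` L v \<inter> g ` C i = g ` (L v \<inter> C i)" if v: "v \<in> V" and i: "i < length ks" for v i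
  proof
    show "g ` L v \<inter> g ` C i \<subseteq> g ` (L v \<inter> C i)"
    proof
      fix z assume "z \<in> g ` L v \<inter> g ` C i"
      then obtain x y where x: "x \<in> L v" "z = g x" and y: "y \<in> C i" "z = g y" by auto
      from x(1) v cover obtain j where j: "j < length ks" "x \<in> C j" by auto
      have "z \<in> C i \<inter> C j" using x y j into i by blast
      then have "j = i" using disj i j by blast
      then show "z \<in> g ` (L v \<inter> C i)" using x j by blast
    qed
  qed blast
  show ?thesis
    unfolding colour_groups_def
  proof (intro conjI ballI allI impI)
    show "(\<Union>i<length ks. g ` C i) = (\<Union>v\<in>V. g ` L v)"
      using arg_cong[OF cover, of "image g"] by (simp add: image_UN)
  next
    fix i j assume "i < length ks" "j < length ks" "i \<noteq> j"
    then show "g ` C i \<inter> g ` C j = {}" using disj into by blast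
  next
    fix v i assume "v \<in> V" "i < length ks"
    moreover have "inj_on g (L v \<inter> C i)"
      using inj \<open>v \<in> V\<close> inj_on_subset by blast
    ultimately show "card (g ` L v \<inter> g ` C i) = ks ! i"
      using trace card by (simp add: card_image)
  qed
qed

definition collapse :: "(nat \<Rightarrow> 'c set) \<Rightarrow> nat set \<Rightarrow> 'c \<Rightarrow> 'c" where
  "collapse C S x =
     (if \<exists>i\<in>S. x \<in> C i then SOME y. \<exists>i\<in>S. x \<in> C i \<and> y \<in> C i else x)"

locale disjoint_groups =
  fixes C :: "nat \<Rightarrow> 'c set" and I S :: "nat set"
  assumes disjoint: "\<And>i j. i \<in> I \<Longrightarrow> j \<in> I \<Longrightarrow> i \<noteq> j \<Longrightarrow> C i \<inter> C j = {}"
    and subset: "S \<subseteq> I"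
begin

lemma group_unique: "i \<in> I \<Longrightarrow> j \<in> I \<Longrightarrow> x \<in> C i \<Longrightarrow> x \<in> C j \<Longrightarrow> i = j"
  using disjoint by blast

lemma collapse_outside: "\<not> (\<exists>i\<in>S. x \<in> C i) \<Longrightarrow> collapse C S x = x"
  unfolding collapse_def by simp

lemma collapse_eq_Eps:
  assumes "i \<in> S" "x \<in> C i"
  shows "collapse C S x = (SOME y. y \<in> C i)"
proof -
  have "j = i" if "j \<in> S" "x \<in> C j" for j
    using group_unique subset assms that by blast
  then have "(\<exists>j\<in>S. x \<in> C j \<and> y \<in> C j) \<longleftrightarrow> y \<in> C i" for y
    using assms by blast
  then show ?thesis
    unfolding collapse_def using assms by auto
qed

lemma collapse_in_group:
  assumes "i \<in> S" "x \<in> C i"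
  shows "collapse C S x \<in> C i"
  unfolding collapse_eq_Eps[OF assms] using assms(2) by (rule someI)

lemma collapse_in_group_iff:
  assumes "i \<in> S"
  shows "collapse C S x \<in> C i \<longleftrightarrow> x \<in> C i"
proof (cases "\<exists>j\<in>S. x \<in> C j")
  case True
  then obtain j where j: "j \<in> S" "x \<in> C j" by blast
  then have "collapse C S x \<in> C j"
    by (rule collapse_in_group)
  then show ?thesis
    using group_unique[of i j] j assms subset by blast
qed (simp add: collapse_outside)

lemma collapse_maps_group_into_itself:
  assumes "j \<in> I" "x \<in> C j"
  shows "collapse C S x \<in> C j"
proof (cases "\<exists>i\<in>S. x \<in> C i")
  case True
  then obtain i where i: "i \<in> S" "x \<in> C i" by blast
  then have "i = j"
    using group_unique assms subset by blast
  then show ?thesis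
    using collapse_in_group i by blast
qed (simp add: collapse_outside assms)

lemma collapse_image_singleton:
  assumes "i \<in> S" "C i \<noteq> {}"
  shows "collapse C S ` C i = {SOME y. y \<in> C i}"
  using assms collapse_eq_Eps by auto

lemma inj_on_collapse:
  assumes "\<And>i x y. i \<in> S \<Longrightarrow> x \<in> A \<inter> C i \<Longrightarrow> y \<in> A \<inter> C i \<Longrightarrow> x = y"
  shows "inj_on (collapse C S) A"
proof
  fix x y assume xy: "x \<in> A" "y \<in> A" and eq: "collapse C S x = collapse C S y"
  have same_group: "x = y"
    if "i \<in> S" "x \<in> C i" "x \<in> A" "y \<in> A" "collapse C S x = collapse C S y" for i x y
  proof -
    have "collapse C S y \<in> C i"
      using collapse_in_group[OF that(1,2)] that(5) by simp
    then have "y \<in> C i"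
      using collapse_in_group_iff[OF that(1)] by blast
    then show ?thesis
      using assms that by blast
  qed
  show "x = y"
  proof (cases "\<exists>i\<in>S. x \<in> C i \<or> y \<in> C i")
    case True
    then obtain i where i: "i \<in> S" "x \<in> C i \<or> y \<in> C i" by blast
    then show ?thesis
      using same_group[OF i(1) _ xy eq] same_group[OF i(1) _ xy(2,1) eq[symmetric]] by blast
  next
    case False
    then show ?thesis
      using eq by (simp add: collapse_outside)
  qed
qed

end

lemma lambda_assignment_if_special:
  "special_lambda_assignment V L ks \<Longrightarrow> lambda_assignment V L ks"
  unfolding special_lambda_assignment_def lambda_assignment_def by blast

lemma special_lambda_assignment_collapse:
  assumes "V \<noteq> {}" and k: "k_assignment V L (sum_list ks)" and groups: "colour_groups V L ks C"
  defines "S \<equiv> {i. i < length ks \<and> ks ! i = 1}"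
  shows "special_lambda_assignment V (\<lambda>v. collapse C S ` L v) ks"
proof -
  interpret disjoint_groups C "{..<length ks}" S
    using groups unfolding colour_groups_def S_def by unfold_locales auto
  have card: "\<And>v i. v \<in> V \<Longrightarrow> i < length ks \<Longrightarrow> card (L v \<inter> C i) = ks ! i"
    using groups unfolding colour_groups_def by auto
  have single: "x = y" if "v \<in> V" "i \<in> S" "x \<in> L v \<inter> C i" "y \<in> L v \<inter> C i" for v i x y
    using that card[of v i] unfolding S_def
    by (metis (mono_tags) IntI card_1_singletonE mem_Collect_eq singletonD)
  have inj: "\<forall>v\<in>V. inj_on (collapse C S) (L v)"
  proof
    fix v assume "v \<in> V"
    show "inj_on (collapse C S) (L v)"
      by (intro inj_on_collapse single[OF \<open>v \<in> V\<close>])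
  qed
  have nonempty: "C i \<noteq> {}" if "i \<in> S" for i
  proof -
    obtain v where "v \<in> V" using \<open>V \<noteq> {}\<close> by blast
    then have "card (L v \<inter> C i) = 1"
      using card that unfolding S_def by simp
    then show ?thesis by auto
  qed
  have "\<forall>i<length ks. collapse C S ` C i \<subseteq> C i"
    by (simp add: image_subset_iff collapse_maps_group_into_itself)
  then have groups': "colour_groups V (\<lambda>v. collapse C S ` L v) ks (\<lambda>i. collapse C S ` C i)"
    by (rule colour_groups_image[OF groups _ inj])
  have singletons: "\<forall>i<length ks. ks ! i = 1 \<longrightarrow> (\<exists>c. collapse C S ` C i = {c})"
  proof (intro allI impI)
    fix i assume "i < length ks" "ks ! i = 1"
    then have "i \<in> S" unfolding S_def by simp
    then show "\<exists>c. collapse C S ` C i = {c}"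
      using collapse_image_singleton[OF \<open>i \<in> S\<close> nonempty] by blast
  qed
  show ?thesis
    unfolding special_lambda_assignment_def
  proof (intro conjI exI)
    show "k_assignment V (\<lambda>v. collapse C S ` L v) (sum_list ks)"
      by (rule k_assignment_image[OF k inj])
    show "colour_groups V (\<lambda>v. collapse C S ` L v) ks (\<lambda>i. collapse C S ` C i)"
      by (fact groups')
    show "\<forall>i<length ks. ks ! i = 1 \<longrightarrow> (\<exists>c. collapse C S ` C i = {c})"
      by (fact singletons)
  qed
qed

lemma L_colourable_if_special_colourable:
  assumes "graph V E"
    and special: "\<forall>L :: 'v \<Rightarrow> 'c set. special_lambda_assignment V L ks \<longrightarrow> L_colourable V E L"
    and "lambda_assignment V (L :: 'v \<Rightarrow> 'c set) ks"
  shows "L_colourable V E L"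
proof (cases "V = {}")
  case True
  then show ?thesis
    using \<open>graph V E\<close> unfolding L_colourable_def graph_def by auto
next
  case False
  obtain C where "k_assignment V L (sum_list ks)" "colour_groups V L ks C"
    using assms(3) unfolding lambda_assignment_def by blast
  then have "special_lambda_assignment V (\<lambda>v. collapse C {i. i < length ks \<and> ks ! i = 1} ` L v) ks"
    by (rule special_lambda_assignment_collapse[OF False])
  then have "L_colourable V E (\<lambda>v. collapse C {i. i < length ks \<and> ks ! i = 1} ` L v)"
    using special by blast
  moreover have "\<forall>u v. E u v \<longrightarrow> u \<in> V \<and> v \<in> V"
    using \<open>graph V E\<close> unfolding graph_def by blast
  ultimately show ?thesis
    using L_colourable_image by blast
qed

theorem lemma1:
  fixes V :: "'v set" and E :: "'v \<Rightarrow> 'v \<Rightarrow> bool"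
    and lam :: "nat multiset" and ks :: "nat list" and k :: nat
  assumes "graph V E"
    and "k > 0" and "is_partition lam k" and "lam = mset ks"
  shows "lambda_choosable V E ks TYPE('c) \<longleftrightarrow>
         (\<forall>L :: 'v \<Rightarrow> 'c set. special_lambda_assignment V L ks \<longrightarrow> L_colourable V E L)"
  unfolding lambda_choosable_def
  using L_colourable_if_special_colourable[OF assms(1)] lambda_assignment_if_special by blast

end
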